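(* Let $X$ be a real-valued semimartingale with independent increments, with deterministic differential characteristics $(b^{X[1]}_t,c^X_t,F^X_t)$ relative to an activity process $A$ and the truncation $x\mathbf 1_{\{|x|\le1\}}$. For each $t$, define $\psi:\mathbb{R}\to[-\infty,\infty)$ by $$\psi(y)=b^{X[1]}_ty-\tfrac12c^X_ty^2+\int_{\mathbb{R}}\big(g_{\mathrm{MMV}}(xy)-xy\mathbf 1_{\{|x|\le1\}}\big)F^X_t(dx).$$ Then $$\infty>\lim_{y\to\infty}\frac{\psi(y)}{y}=b^{X[1]}_t-\int_{\mathbb{R}}x\mathbf 1_{\{0<x\le1\}}F^X_t(dx)-\infty\big(\mathbf 1_{\{c^X_t>0\}}+\mathbf 1_{\{F^X_t((-\infty,0))>0\}}\big),$$ with the convention $\infty\times0=0$.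
   Context: Here $g_{\mathrm{MMV}}(x)=x\wedge1-\frac12(x\wedge1)^2$. The characteristics are understood as follows: $X-\sum_{s\le\cdot}\Delta X_s\mathbf 1_{\{|\Delta X_s|>1\}}$ has drift $b^{X[1]}\cdot A$, $\langle X^c,X^c\rangle=c^X\cdot A$, and the jump compensator is $F^X_t(dx)\,dA_t$. $F^X_t$ is a Lévy measure, i.e. $\int(x^2\wedge1)F^X_t(dx)<\infty$ and $F^X_t(\{0\})=0$. *)

theory Defs
  imports "HOL-Analysis.Analysis"
begin

definition g_MMV :: "real \<Rightarrow> real" where
  "g_MMV x = min x 1 - (min x 1)^2 / 2"

definition levy_measure :: "real measure \<Rightarrow> bool" where
  "levy_measure F \<longleftrightarrow> sets F = sets borel \<and> emeasure F {0} = 0 \<and>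
     (\<integral>\<^sup>+ x. ennreal (min (x^2) 1) \<partial>F) < \<infinity>"

definition ereal_integral :: "real measure \<Rightarrow> (real \<Rightarrow> real) \<Rightarrow> ereal" where
  "ereal_integral F f =
     enn2ereal (\<integral>\<^sup>+ x. ennreal (f x) \<partial>F) - enn2ereal (\<integral>\<^sup>+ x. ennreal (- f x) \<partial>F)"

definition psi_MMV :: "real \<Rightarrow> real \<Rightarrow> real measure \<Rightarrow> real \<Rightarrow> ereal" where
  "psi_MMV b c F y = ereal (b * y - c * y^2 / 2) +
     ereal_integral F (\<lambda>x. g_MMV (x * y) - x * y * indicator {x. \<bar>x\<bar> \<le> 1} x)"

end

theory Submission
  imports Defs
begin

(* For y > 0, psi(y)/y = b - c y/2 + (integral of h_y dF), where h_y(x) = (g_MMV(xy) - xy 1{|x| <= 1})/y.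
   The positive part of h_y is at most min(x^2, 1)/y, so it vanishes in the limit as F is a Levy measure.
   On x < 0 the negative part of h_y is at least y x^2/2: together with c y/2 this loss grows linearly
   in y unless c = 0 and F((-oo, 0)) = 0, when it is null.  On x > 0 the negative part is
   (x - g_MMV(xy)/y) 1{x <= 1}, which increases to x 1{0 < x <= 1} because g_MMV(z)/z is decreasing
   and g_MMV <= 1/2; monotone convergence then yields the integral of x over the small positive jumps. *)

lemma mono_on_tendsto_at_top:
  fixes f :: "real \<Rightarrow> 'a::linorder_topology"
  assumes mono: "mono_on {a..} f"
    and X: "filterlim X at_top sequentially"
    and lim: "(\<lambda>n. f (X n)) \<longlonglongrightarrow> l"
  shows "(f \<longlongrightarrow> l) at_top"
proof -
  have X_ge: "\<forall>\<^sub>F n in sequentially. y \<le> X n" for y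
    using X by (simp add: filterlim_at_top)
  have bound: "f y \<le> l" if "a \<le> y" for y
  proof (rule tendsto_lowerbound[OF lim _ sequentially_bot])
    show "\<forall>\<^sub>F n in sequentially. f y \<le> f (X n)"
      using X_ge[of y] by eventually_elim (use that in \<open>auto intro: mono_onD[OF mono]\<close>)
  qed
  show ?thesis
  proof (rule increasing_tendsto)
    show "\<forall>\<^sub>F y in at_top. f y \<le> l"
      using eventually_ge_at_top[of a] by eventually_elim (rule bound)
  next
    fix m assume "m < l"
    have "\<forall>\<^sub>F n in sequentially. m < f (X n) \<and> a \<le> X n"
      using order_tendstoD(1)[OF lim \<open>m < l\<close>] X_ge[of a] by eventually_elim (rule conjI)
    then obtain n where n: "m < f (X n)" "a \<le> X n"
      using eventually_sequentially by auto
    show "\<forall>\<^sub>F y in at_top. m < f y"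
      using eventually_ge_at_top[of "X n"]
    proof eventually_elim
      case (elim y)
      then have "f (X n) \<le> f y" using n(2) by (intro mono_onD[OF mono]) auto
      with n(1) show ?case by (rule less_le_trans)
    qed
  qed
qed

lemma nn_integral_mono_on_tendsto_at_top:
  fixes f :: "real \<Rightarrow> 'a \<Rightarrow> ennreal"
  assumes meas: "\<And>y. f y \<in> borel_measurable M"
    and mono: "\<And>x. mono_on {a..} (\<lambda>y. f y x)"
    and lim: "\<And>x. ((\<lambda>y. f y x) \<longlongrightarrow> g x) at_top"
  shows "((\<lambda>y. \<integral>\<^sup>+x. f y x \<partial>M) \<longlongrightarrow> \<integral>\<^sup>+x. g x \<partial>M) at_top"
proof (rule mono_on_tendsto_at_top)
  define X where "X n = a + real n" for n
  show X: "filterlim X at_top sequentially"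
    unfolding X_def by (intro filterlim_tendsto_add_at_top[OF tendsto_const filterlim_real_sequentially])
  show "mono_on {a..} (\<lambda>y. \<integral>\<^sup>+x. f y x \<partial>M)"
    by (intro mono_onI nn_integral_mono mono_onD[OF mono])
  show "(\<lambda>n. \<integral>\<^sup>+x. f (X n) x \<partial>M) \<longlonglongrightarrow> \<integral>\<^sup>+x. g x \<partial>M"
  proof (rule nn_integral_LIMSEQ)
    show "incseq (\<lambda>n x. f (X n) x)"
      by (intro incseq_SucI le_funI mono_onD[OF mono]) (auto simp: X_def)
    show "(\<lambda>n. f (X n) x) \<longlonglongrightarrow> g x" for x
      using filterlim_compose[OF lim X] .
  qed (use meas in auto)
qed

lemma ereal_integral_divide:
  assumes "f \<in> borel_measurable F" "0 < y"
  shows "ereal_integral F f / ereal y = ereal_integral F (\<lambda>x. f x / y)"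
proof -
  have scale: "(\<integral>\<^sup>+x. ennreal (h x / y) \<partial>F) = (\<integral>\<^sup>+x. ennreal (h x) \<partial>F) * ennreal (1/y)"
    if "h \<in> borel_measurable F" for h
  proof -
    have "(\<integral>\<^sup>+x. ennreal (h x / y) \<partial>F) = (\<integral>\<^sup>+x. ennreal (h x) * ennreal (1/y) \<partial>F)"
      using assms(2) by (intro nn_integral_cong) (simp add: ennreal_mult''[symmetric])
    also have "\<dots> = (\<integral>\<^sup>+x. ennreal (h x) \<partial>F) * ennreal (1/y)"
      using that by (intro nn_integral_multc) simp
    finally show ?thesis .
  qed
  have "ereal_integral F (\<lambda>x. f x / y) =
      (enn2ereal (\<integral>\<^sup>+x. ennreal (f x) \<partial>F) - enn2ereal (\<integral>\<^sup>+x. ennreal (- f x) \<partial>F)) * ereal (1/y)"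
    using scale[of f] scale[of "\<lambda>x. - f x"] assms
    by (cases "\<integral>\<^sup>+x. ennreal (f x) \<partial>F"; cases "\<integral>\<^sup>+x. ennreal (- f x) \<partial>F")
       (auto simp: ereal_integral_def ennreal_mult_top ennreal_top_mult ennreal_mult''[symmetric]
          diff_divide_distrib)
  then show ?thesis
    using assms(2) by (simp add: ereal_integral_def divide_ereal_def inverse_eq_divide)
qed

lemma nn_integral_indicator_pos:
  fixes f :: "'a \<Rightarrow> ennreal"
  assumes "A \<in> sets M" "f \<in> borel_measurable M" "\<And>x. x \<in> A \<Longrightarrow> 0 < f x" "0 < emeasure M A"
  shows "0 < (\<integral>\<^sup>+x. f x * indicator A x \<partial>M)"
proof (rule ccontr)
  assume "\<not> ?thesis"
  then have "AE x in M. f x * indicator A x = 0"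
    using assms(1,2) by (simp add: nn_integral_0_iff_AE)
  then have "AE x in M. x \<notin> A"
    by eventually_elim (auto split: split_indicator dest: assms(3))
  then have "A \<in> null_sets M"
    using assms(1) by (simp add: AE_iff_null_sets)
  with assms(4) show False by (simp add: null_setsD1)
qed

lemma g_MMV_le_id: "g_MMV z \<le> z"
  by (simp add: g_MMV_def min_def)

lemma g_MMV_nonneg: "0 \<le> z \<Longrightarrow> 0 \<le> g_MMV z"
  by (auto simp: g_MMV_def min_def power2_eq_square intro: mult_right_le_one_le order_trans[of _ z])

lemma g_MMV_le_half: "g_MMV z \<le> 1/2"
proof -
  have "0 \<le> (min z 1 - 1)^2" by simp
  then show ?thesis by (simp add: g_MMV_def power2_eq_square algebra_simps)
qed

lemma g_MMV_div_antimono: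
  assumes "0 < z" "z \<le> w"
  shows "g_MMV w / w \<le> g_MMV z / z"
proof -
  consider "w \<le> 1" | "z \<le> 1" "1 < w" | "1 < z" using assms by linarith
  then show ?thesis
  proof cases
    case 2
    then have "g_MMV w / w \<le> 1/2" by (simp add: g_MMV_def)
    also have "1/2 \<le> g_MMV z / z" using assms 2 by (simp add: g_MMV_def power2_eq_square field_simps)
    finally show ?thesis .
  qed (use assms in \<open>auto simp: g_MMV_def power2_eq_square field_simps\<close>)
qed

lemma g_MMV_scaled_antimono:
  assumes "0 < x" "0 < y" "y \<le> z"
  shows "g_MMV (x * z) / z \<le> g_MMV (x * y) / y"
proof -
  have "g_MMV (x * z) / z = x * (g_MMV (x * z) / (x * z))" using assms by simp
  also have "\<dots> \<le> x * (g_MMV (x * y) / (x * y))"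
    using assms by (intro mult_left_mono g_MMV_div_antimono) auto
  also have "\<dots> = g_MMV (x * y) / y" using assms by simp
  finally show ?thesis .
qed

lemma g_MMV_scaled_tendsto_0:
  assumes "0 < x"
  shows "((\<lambda>y. g_MMV (x * y) / y) \<longlongrightarrow> 0) at_top"
proof (rule tendsto_sandwich[of "\<lambda>_. 0" _ _ inverse])
  show "\<forall>\<^sub>F y in at_top. 0 \<le> g_MMV (x * y) / y"
    using eventually_gt_at_top[of 0] by eventually_elim (use assms in \<open>simp add: g_MMV_nonneg\<close>)
  show "\<forall>\<^sub>F y in at_top. g_MMV (x * y) / y \<le> inverse y"
    using eventually_gt_at_top[of 0]
  proof eventually_elim
    case (elim y)
    have "g_MMV (x * y) \<le> 1" using g_MMV_le_half[of "x * y"] by simp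
    then show ?case using elim by (simp add: divide_right_mono inverse_eq_divide)
  qed
  show "(inverse \<longlongrightarrow> (0::real)) at_top"
    by (rule tendsto_inverse_0_at_top[OF filterlim_ident])
qed simp

lemma borel_measurable_g_MMV [measurable]: "g_MMV \<in> borel_measurable borel"
  unfolding g_MMV_def by measurable

definition mmv_integrand :: "real \<Rightarrow> real \<Rightarrow> real" where
  "mmv_integrand y x = g_MMV (x * y) - x * y * indicator {x. \<bar>x\<bar> \<le> 1} x"

lemma borel_measurable_mmv_integrand [measurable]: "mmv_integrand y \<in> borel_measurable borel"
  unfolding mmv_integrand_def by measurable

lemma mmv_integrand_le: "mmv_integrand y x \<le> min (x^2) 1"
proof (cases "\<bar>x\<bar> \<le> 1")
  case True
  then have "mmv_integrand y x \<le> 0" using g_MMV_le_id[of "x * y"] by (simp add: mmv_integrand_def)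
  moreover have "0 \<le> min (x^2) 1" by simp
  ultimately show ?thesis by linarith
next
  case False
  then have "1 \<le> x^2" using abs_le_square_iff[of 1 x] by simp
  then show ?thesis using False g_MMV_le_half[of "x * y"] by (simp add: mmv_integrand_def)
qed

lemma mmv_integrand_neg_jump:
  assumes "x < 0" "0 < y"
  shows "y * x^2 / 2 \<le> - mmv_integrand y x / y"
proof -
  have "x * y < 0" using assms by (simp add: mult_neg_pos)
  then have "(x * y)^2 / 2 \<le> - mmv_integrand y x"
    using assms by (auto simp: mmv_integrand_def g_MMV_def indicator_def)
  then show ?thesis using assms by (simp add: field_simps power2_eq_square)
qed

lemma mmv_integrand_pos_jump:
  assumes "0 < x" "0 < y"
  shows "ennreal (- mmv_integrand y x / y) = ennreal ((x - g_MMV (x * y) / y) * indicator {0<..1} x)"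
proof (cases "x \<le> 1")
  case True
  then show ?thesis using assms by (simp add: mmv_integrand_def field_simps)
next
  case False
  then have "- mmv_integrand y x / y \<le> 0"
    using assms g_MMV_nonneg[of "x * y"] by (simp add: mmv_integrand_def divide_nonpos_pos)
  then show ?thesis using False by (simp add: ennreal_neg)
qed

definition psi_gain :: "real measure \<Rightarrow> real \<Rightarrow> ennreal" where
  "psi_gain F y = (\<integral>\<^sup>+x. ennreal (mmv_integrand y x / y) \<partial>F)"

definition psi_small_jump_loss :: "real measure \<Rightarrow> real \<Rightarrow> ennreal" where
  "psi_small_jump_loss F y = (\<integral>\<^sup>+x. ennreal ((x - g_MMV (x * y) / y) * indicator {0<..1} x) \<partial>F)"

definition psi_neg_jump_loss :: "real measure \<Rightarrow> real \<Rightarrow> ennreal" where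
  "psi_neg_jump_loss F y = (\<integral>\<^sup>+x. ennreal (- mmv_integrand y x / y) * indicator {..<0} x \<partial>F)"

lemma nn_integral_neg_mmv_integrand_split:
  assumes "sets F = sets borel" "0 < y"
  shows "(\<integral>\<^sup>+x. ennreal (- mmv_integrand y x / y) \<partial>F) = psi_neg_jump_loss F y + psi_small_jump_loss F y"
proof -
  have pointwise: "ennreal (- mmv_integrand y x / y) = ennreal (- mmv_integrand y x / y) * indicator {..<0} x
      + ennreal ((x - g_MMV (x * y) / y) * indicator {0<..1} x)" for x
    using mmv_integrand_pos_jump[of x y] assms(2)
    by (cases x "0::real" rule: linorder_cases) (auto simp: mmv_integrand_def g_MMV_def)
  show ?thesis
    unfolding psi_neg_jump_loss_def psi_small_jump_loss_def
    by (subst pointwise, rule nn_integral_add) (simp_all add: measurable_cong_sets[OF assms(1) refl])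
qed

lemma psi_gain_le:
  assumes "sets F = sets borel" "0 < y"
  shows "psi_gain F y \<le> (\<integral>\<^sup>+x. ennreal (min (x^2) 1) \<partial>F) * ennreal (1 / y)"
proof -
  have "psi_gain F y \<le> (\<integral>\<^sup>+x. ennreal (min (x^2) 1) * ennreal (1 / y) \<partial>F)"
    unfolding psi_gain_def using assms(2) mmv_integrand_le
    by (intro nn_integral_mono) (simp add: ennreal_mult''[symmetric] ennreal_leI divide_right_mono)
  also have "\<dots> = (\<integral>\<^sup>+x. ennreal (min (x^2) 1) \<partial>F) * ennreal (1 / y)"
    by (rule nn_integral_multc) (simp add: measurable_cong_sets[OF assms(1) refl])
  finally show ?thesis .
qed

lemma psi_MMV_div_eq:
  assumes "sets F = sets borel" "(\<integral>\<^sup>+x. ennreal (min (x^2) 1) \<partial>F) < \<infinity>" "0 \<le> c" "0 < y"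
  shows "psi_MMV b c F y / ereal y = ereal b + enn2ereal (psi_gain F y)
           - enn2ereal (ennreal (c * y / 2) + psi_neg_jump_loss F y + psi_small_jump_loss F y)"
proof -
  have gain_finite: "psi_gain F y \<noteq> top"
    using psi_gain_le[OF assms(1,4)] assms(2) by (auto simp: ennreal_mult_eq_top_iff top_unique)
  have meas: "mmv_integrand y \<in> borel_measurable F"
    using assms(1) by (simp add: measurable_cong_sets[OF assms(1) refl])
  have "psi_MMV b c F y = ereal (b * y - c * y^2 / 2) + ereal_integral F (mmv_integrand y)"
    by (simp add: psi_MMV_def mmv_integrand_def[abs_def])
  then have "psi_MMV b c F y / ereal y = ereal (b - c * y / 2) + ereal_integral F (mmv_integrand y) / ereal y"
    using assms(4)
    by (cases "ereal_integral F (mmv_integrand y)")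
       (auto simp: divide_ereal_def power2_eq_square field_simps)
  also have "\<dots> = ereal (b - c * y / 2) + ereal_integral F (\<lambda>x. mmv_integrand y x / y)"
    by (simp add: ereal_integral_divide[OF meas assms(4)])
  also have "\<dots> = ereal (b - c * y / 2) + (enn2ereal (psi_gain F y)
      - enn2ereal (psi_neg_jump_loss F y + psi_small_jump_loss F y))"
    using nn_integral_neg_mmv_integrand_split[OF assms(1,4)]
    by (simp add: ereal_integral_def psi_gain_def)
  also have "\<dots> = ereal b + enn2ereal (psi_gain F y)
      - enn2ereal (ennreal (c * y / 2) + psi_neg_jump_loss F y + psi_small_jump_loss F y)"
    using assms(3,4) gain_finite
    by (cases "psi_gain F y"; cases "psi_neg_jump_loss F y + psi_small_jump_loss F y")
       (auto simp: add.assoc ennreal_plus[symmetric] simp del: ennreal_plus)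
  finally show ?thesis .
qed

lemma psi_gain_tendsto_0:
  assumes "sets F = sets borel" "(\<integral>\<^sup>+x. ennreal (min (x^2) 1) \<partial>F) < \<infinity>"
  shows "(psi_gain F \<longlongrightarrow> 0) at_top"
proof (rule tendsto_sandwich[OF _ _ tendsto_const])
  show "\<forall>\<^sub>F y in at_top. 0 \<le> psi_gain F y" by simp
  show "\<forall>\<^sub>F y in at_top. psi_gain F y \<le> (\<integral>\<^sup>+x. ennreal (min (x^2) 1) \<partial>F) * ennreal (1 / y)"
    using eventually_gt_at_top[of 0] by eventually_elim (rule psi_gain_le[OF assms(1)])
  have "((\<lambda>y. ennreal (1 / y)) \<longlongrightarrow> ennreal 0) at_top"
    by (intro tendsto_ennrealI tendsto_divide_0[OF tendsto_const] filterlim_at_top_imp_at_infinity filterlim_ident)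
  then show "((\<lambda>y. (\<integral>\<^sup>+x. ennreal (min (x^2) 1) \<partial>F) * ennreal (1 / y)) \<longlongrightarrow> 0) at_top"
    using tendsto_mult_ennreal[OF tendsto_const, of "\<lambda>y. ennreal (1 / y)" 0 at_top] assms(2) by simp
qed

lemma psi_small_jump_loss_tendsto:
  assumes "sets F = sets borel"
  shows "(psi_small_jump_loss F \<longlongrightarrow> (\<integral>\<^sup>+x. ennreal x * indicator {0<..1} x \<partial>F)) at_top"
proof -
  have eq: "(\<integral>\<^sup>+x. ennreal (x * indicator {0<..1} x) \<partial>F) = (\<integral>\<^sup>+x. ennreal x * indicator {0<..1} x \<partial>F)"
    by (intro nn_integral_cong) (simp split: split_indicator)
  have "(psi_small_jump_loss F \<longlongrightarrow> (\<integral>\<^sup>+x. ennreal (x * indicator {0<..1} x) \<partial>F)) at_top"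
    unfolding psi_small_jump_loss_def
  proof (rule nn_integral_mono_on_tendsto_at_top[where a = 1])
    fix x :: real
    show "mono_on {1..} (\<lambda>y. ennreal ((x - g_MMV (x * y) / y) * indicator {0<..1} x))"
      by (intro mono_onI ennreal_leI) (auto simp: indicator_def g_MMV_scaled_antimono)
    have "((\<lambda>y. (x - g_MMV (x * y) / y) * indicator {0<..1} x) \<longlongrightarrow> (x - 0) * indicator {0<..1} x) at_top"
    proof (cases "0 < x")
      case True
      then show ?thesis by (intro tendsto_mult_right tendsto_diff tendsto_const g_MMV_scaled_tendsto_0)
    qed (simp add: indicator_def)
    then show "((\<lambda>y. ennreal ((x - g_MMV (x * y) / y) * indicator {0<..1} x))
        \<longlongrightarrow> ennreal (x * indicator {0<..1} x)) at_top"
      by (intro tendsto_ennrealI) simp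
  qed (simp add: measurable_cong_sets[OF assms refl])
  then show ?thesis
    unfolding eq .
qed

lemma psi_neg_jump_loss_ge:
  assumes "sets F = sets borel" "0 < y"
  shows "ennreal (y / 2) * (\<integral>\<^sup>+x. ennreal (x^2) * indicator {..<0} x \<partial>F) \<le> psi_neg_jump_loss F y"
proof -
  have "ennreal (y / 2) * (\<integral>\<^sup>+x. ennreal (x^2) * indicator {..<0} x \<partial>F)
      = (\<integral>\<^sup>+x. ennreal (y / 2) * (ennreal (x^2) * indicator {..<0} x) \<partial>F)"
    by (rule nn_integral_cmult[symmetric]) (simp add: measurable_cong_sets[OF assms(1) refl])
  also have "\<dots> \<le> psi_neg_jump_loss F y"
    unfolding psi_neg_jump_loss_def
  proof (intro nn_integral_mono)
    fix x :: real
    show "ennreal (y / 2) * (ennreal (x^2) * indicator {..<0} x)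
        \<le> ennreal (- mmv_integrand y x / y) * indicator {..<0} x"
    proof (cases "x < 0")
      case True
      have "ennreal (y / 2) * ennreal (x^2) = ennreal (y * x^2 / 2)"
        using assms(2) by (simp add: ennreal_mult''[symmetric])
      also have "\<dots> \<le> ennreal (- mmv_integrand y x / y)"
        by (intro ennreal_leI mmv_integrand_neg_jump True assms(2))
      finally show ?thesis using True by (simp add: mult.assoc[symmetric])
    qed simp
  qed
  finally show ?thesis .
qed

lemma psi_neg_jump_loss_null:
  assumes "sets F = sets borel" "emeasure F {..<0} = 0"
  shows "psi_neg_jump_loss F y = 0"
  unfolding psi_neg_jump_loss_def using assms by (intro nn_integral_null_set) (simp add: null_sets_def)

lemma psi_quadratic_loss_tendsto:
  assumes "sets F = sets borel" "0 \<le> c"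
  shows "((\<lambda>y. ennreal (c * y / 2) + psi_neg_jump_loss F y)
           \<longlongrightarrow> (if 0 < c \<or> 0 < emeasure F {..<0} then \<infinity> else 0)) at_top"
proof (cases "0 < c \<or> 0 < emeasure F {..<0}")
  case False
  then have "c = 0" "emeasure F {..<0} = 0" using assms(2) by auto
  then show ?thesis using False by (simp add: psi_neg_jump_loss_null[OF assms(1)])
next
  case True
  define K where "K = (\<integral>\<^sup>+x. ennreal (x^2) * indicator {..<0} x \<partial>F)"
  have "ennreal c + K \<noteq> 0"
  proof (cases "0 < c")
    case False
    with True have "0 < K"
      unfolding K_def using assms(1)
      by (intro nn_integral_indicator_pos) (simp_all add: measurable_cong_sets[OF assms(1) refl])
    then show ?thesis by (simp add: gr_implies_not_zero)
  qed simp
  moreover have "LIM y at_top. y * (1 / 2 :: real) :> at_top"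
    by (rule filterlim_at_top_mult_tendsto_pos[OF tendsto_const _ filterlim_ident]) simp
  then have "((\<lambda>y. ennreal (y / 2)) \<longlongrightarrow> \<infinity>) at_top"
    by (simp add: ennreal_tendsto_top_eq_at_top)
  ultimately have growth: "((\<lambda>y. ennreal (y / 2) * (ennreal c + K)) \<longlongrightarrow> \<infinity>) at_top"
    using tendsto_mult_ennreal[OF _ tendsto_const, of "\<lambda>y. ennreal (y / 2)" \<infinity> at_top "ennreal c + K"]
    by (simp add: ennreal_top_mult split: if_splits)
  have "\<forall>\<^sub>F y in at_top. ennreal (y / 2) * (ennreal c + K) \<le> ennreal (c * y / 2) + psi_neg_jump_loss F y"
    using eventually_gt_at_top[of 0]
  proof eventually_elim
    case (elim y)
    have "ennreal (y / 2) * ennreal c = ennreal (c * y / 2)"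
      using assms(2) by (subst mult.commute) (simp add: ennreal_mult'[symmetric])
    then show ?case
      using psi_neg_jump_loss_ge[OF assms(1) elim]
      by (simp add: distrib_left K_def add_left_mono)
  qed
  then have "((\<lambda>y. ennreal (c * y / 2) + psi_neg_jump_loss F y) \<longlongrightarrow> \<infinity>) at_top"
    by (rule tendsto_sandwich[OF _ _ growth tendsto_const]) simp
  then show ?thesis using True by simp
qed

theorem lemmaC1:
  fixes b c :: real and F :: "real measure"
  assumes "c \<ge> 0" and "levy_measure F"
  shows "((\<lambda>y. psi_MMV b c F y / ereal y) \<longlongrightarrow>
            (ereal b - enn2ereal (\<integral>\<^sup>+ x. ennreal x * indicator {0<..1} x \<partial>F)
             - \<infinity> * (of_bool (c > 0) + of_bool (emeasure F {..<0} > 0)))) at_top \<and>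
         ereal b - enn2ereal (\<integral>\<^sup>+ x. ennreal x * indicator {0<..1} x \<partial>F)
             - \<infinity> * (of_bool (c > 0) + of_bool (emeasure F {..<0} > 0)) < \<infinity>"
proof -
  have F: "sets F = sets borel" and L: "(\<integral>\<^sup>+x. ennreal (min (x^2) 1) \<partial>F) < \<infinity>"
    using assms(2) by (auto simp: levy_measure_def)
  define I where "I = (\<integral>\<^sup>+ x. ennreal x * indicator {0<..1} x \<partial>F)"
  define Q where "Q = (if 0 < c \<or> 0 < emeasure F {..<0} then \<infinity> else (0::ennreal))"
  have limit_eq: "ereal b - enn2ereal I - \<infinity> * (of_bool (c > 0) + of_bool (emeasure F {..<0} > 0))
      = ereal b + enn2ereal 0 - enn2ereal (Q + I)"
    by (cases I) (auto simp: Q_def zero_ennreal.rep_eq)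
  have "\<forall>\<^sub>F y in at_top. ereal b + enn2ereal (psi_gain F y)
      - enn2ereal (ennreal (c * y / 2) + psi_neg_jump_loss F y + psi_small_jump_loss F y)
      = psi_MMV b c F y / ereal y"
    using eventually_gt_at_top[of 0] by eventually_elim (simp add: psi_MMV_div_eq[OF F L assms(1)])
  moreover have "((\<lambda>y. ereal b + enn2ereal (psi_gain F y)
      - enn2ereal (ennreal (c * y / 2) + psi_neg_jump_loss F y + psi_small_jump_loss F y))
      \<longlongrightarrow> ereal b + enn2ereal 0 - enn2ereal (Q + I)) at_top"
    unfolding Q_def I_def
    by (intro tendsto_intros psi_gain_tendsto_0[OF F L] psi_quadratic_loss_tendsto[OF F assms(1)]
        psi_small_jump_loss_tendsto[OF F]) auto
  ultimately have "((\<lambda>y. psi_MMV b c F y / ereal y)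
      \<longlongrightarrow> ereal b + enn2ereal 0 - enn2ereal (Q + I)) at_top"
    by (rule Lim_transform_eventually[rotated])
  moreover have "ereal b + enn2ereal 0 - enn2ereal (Q + I) < \<infinity>"
    by (cases "Q + I") (auto simp: zero_ennreal.rep_eq)
  ultimately show ?thesis unfolding I_def[symmetric] limit_eq by simp
qed

end
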